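(* Let $\{X_\gamma\}_{\gamma\in\Gamma}$ be a family of strictly convex real Banach spaces such that $|\Gamma|\geq 2$ and, for every $\gamma$, $\dim(X_\gamma)\geq 2$ and $Sm(X_\gamma)$ is norm dense in $S_{X_\gamma}$. Let $Z$ denote either $Z_0=\bigoplus^{c_0}_{\gamma\in\Gamma}X_\gamma$ or $Z_\infty=\bigoplus^{\ell_\infty}_{\gamma\in\Gamma}X_\gamma$. Let $Y$ be a real Banach space and $\Delta:S_Z\to S_Y$ a surjective isometry such that for every $\gamma\in\Gamma$ and $x\in S_{X_\gamma}$ the restriction of $\Delta$ to $A(\gamma,x)$ is affine. Then $$\psi(\Delta(z))=\varphi_x(z(\gamma))$$ for all $\gamma\in\Gamma$, all $x\in Sm(X_\gamma)$, all $\psi\in\mathrm{supp}(\gamma,x)$, and all $z\in S_Z$ such that $\|z(\gamma')\|=1$ for some $\gamma'\neq\gamma$.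
   Context: All Banach spaces are real. $Z_\infty$ is the space of families $z=(z(\gamma))_{\gamma\in\Gamma}$, $z(\gamma)\in X_\gamma$, with $\|z\|=\sup_\gamma\|z(\gamma)\|<\infty$; $Z_0$ is its closed subspace of families with $\{\gamma:\|z(\gamma)\|>\varepsilon\}$ finite for all $\varepsilon>0$. A Banach space is strictly convex if every point of its unit sphere is an extreme point of its closed unit ball. $x\in S_X$ is a smooth point if there is a unique $f\in S_{X^*}$ with $f(x)=1$; $Sm(X)$ is the set of smooth points and, for $x\in Sm(X)$, $\varphi_x$ denotes that unique functional. For $\gamma\in\Gamma$ and $x\in S_{X_\gamma}$, $A(\gamma,x)=\{z\in S_Z: z(\gamma)=x\}$ (a convex set), and $\mathrm{supp}(\gamma,x)=\{\psi\in S_{Y^*}:\psi^{-1}(\{1\})\cap B_Y=\Delta(A(\gamma,x))\}$. "The restriction of $\Delta$ to $A(\gamma,x)$ is affine" means $\Delta(\alpha a+(1-\alpha)b)=\alpha\Delta(a)+(1-\alpha)\Delta(b)$ for all $a,b\in A(\gamma,x)$, $\alpha\in[0,1]$. *)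

theory Defs
  imports "HOL-Analysis.Analysis"
begin

text \<open>Each space X_gamma is modelled as a closed linear subspace V gamma of a common
real Banach space of type 'a (with the inherited norm).\<close>

definition linear_on :: "'a::real_vector set \<Rightarrow> ('a \<Rightarrow> real) \<Rightarrow> bool" where
  "linear_on V f \<longleftrightarrow> (\<forall>x\<in>V. \<forall>y\<in>V. \<forall>a b. f (a *\<^sub>R x + b *\<^sub>R y) = a * f x + b * f y)"

definition dual_sphere :: "'a::real_normed_vector set \<Rightarrow> ('a \<Rightarrow> real) set" where
  "dual_sphere V = {f. linear_on V f \<and> (\<forall>x\<in>V. \<bar>f x\<bar> \<le> norm x)
                      \<and> (SUP x\<in>V \<inter> sphere 0 1. \<bar>f x\<bar>) = 1}"

definition smooth_point :: "'a::real_normed_vector set \<Rightarrow> 'a \<Rightarrow> bool" where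
  "smooth_point V x \<longleftrightarrow> x \<in> V \<inter> sphere 0 1 \<and> (\<exists>f\<in>dual_sphere V. f x = 1) \<and>
     (\<forall>f\<in>dual_sphere V. \<forall>g\<in>dual_sphere V. f x = 1 \<longrightarrow> g x = 1 \<longrightarrow> (\<forall>v\<in>V. f v = g v))"

definition Sm :: "'a::real_normed_vector set \<Rightarrow> 'a set" where
  "Sm V = {x. smooth_point V x}"

definition phi :: "'a::real_normed_vector set \<Rightarrow> 'a \<Rightarrow> ('a \<Rightarrow> real)" where
  "phi V x = (SOME f. f \<in> dual_sphere V \<and> f x = 1)"

definition strictly_convex_sp :: "'a::real_normed_vector set \<Rightarrow> bool" where
  "strictly_convex_sp V \<longleftrightarrow> (\<forall>x\<in>V \<inter> sphere 0 1. x extreme_point_of (V \<inter> cball 0 1))"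

definition supn :: "('g \<Rightarrow> 'a::real_normed_vector) \<Rightarrow> real" where
  "supn z = (SUP g. norm (z g))"

definition Zinf :: "('g \<Rightarrow> 'a::real_normed_vector set) \<Rightarrow> ('g \<Rightarrow> 'a) set" where
  "Zinf V = {z. (\<forall>g. z g \<in> V g) \<and> bdd_above (range (\<lambda>g. norm (z g)))}"

definition Z0 :: "('g \<Rightarrow> 'a::real_normed_vector set) \<Rightarrow> ('g \<Rightarrow> 'a) set" where
  "Z0 V = {z. (\<forall>g. z g \<in> V g) \<and> (\<forall>e>0. finite {g. norm (z g) > e})}"

definition SZ :: "('g \<Rightarrow> 'a::real_normed_vector) set \<Rightarrow> ('g \<Rightarrow> 'a) set" where
  "SZ Z = {z\<in>Z. supn z = 1}"

definition Aset :: "('g \<Rightarrow> 'a::real_normed_vector) set \<Rightarrow> 'g \<Rightarrow> 'a \<Rightarrow> ('g \<Rightarrow> 'a) set" where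
  "Aset Z g x = {z \<in> SZ Z. z g = x}"

definition supp :: "('g \<Rightarrow> 'a::real_normed_vector) set \<Rightarrow> (('g \<Rightarrow> 'a) \<Rightarrow> 'b::real_normed_vector)
     \<Rightarrow> 'g \<Rightarrow> 'a \<Rightarrow> ('b \<Rightarrow> real) set" where
  "supp Z \<Delta> g x = {\<psi>. bounded_linear \<psi> \<and> onorm \<psi> = 1 \<and>
       {y \<in> cball 0 1. \<psi> y = 1} = \<Delta> ` Aset Z g x}"

end

theory Submission
  imports Defs
begin

text \<open>Fix z with a unit coordinate at g' \<noteq> g. All points z(g := v), v in the unit ball of X_g,
lie in the single set A(g', z g'), on which \<Delta> is affine; so f v = \<psi> (\<Delta> (z(g := v))) is affine
on the ball, bounded by 1, and f x = 1. Strict convexity and the isometry show that the point of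
S_Z mapped to -\<Delta> u, for u \<in> A(g, -x), lies in A(g, x); hence f (-x) = -1 and f 0 = 0. An affine
function on the unit ball vanishing at 0 extends radially to a linear functional, here of norm one
and attaining its norm at x; since x is smooth this functional is \<phi>_x, and evaluating it at z g
gives \<psi> (\<Delta> z) = \<phi>_x (z g).\<close>

lemma dual_sphereI:
  assumes "linear_on V L" "\<And>v. v \<in> V \<Longrightarrow> \<bar>L v\<bar> \<le> norm v"
    and "x \<in> V" "norm x = 1" "L x = 1"
  shows "L \<in> dual_sphere V"
proof -
  have "(SUP v\<in>V \<inter> sphere 0 1. \<bar>L v\<bar>) = 1"
    by (rule cSup_eq_maximum) (use assms in force)+
  then show ?thesis using assms unfolding dual_sphere_def by blast
qed

lemma phi_eq_norming_functional:
  assumes "smooth_point V x" "L \<in> dual_sphere V" "L x = 1" "v \<in> V"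
  shows "phi V x v = L v"
proof -
  have "\<exists>h. h \<in> dual_sphere V \<and> h x = 1" using assms(2,3) by blast
  then have "phi V x \<in> dual_sphere V" "phi V x x = 1"
    unfolding phi_def by (metis (mono_tags, lifting) someI_ex)+
  then show ?thesis using assms unfolding smooth_point_def by blast
qed

locale affine_on_unit_ball =
  fixes V :: "'a::real_normed_vector set" and f :: "'a \<Rightarrow> real"
  assumes subspace: "subspace V"
    and affine: "\<And>u w \<alpha>. u \<in> V \<inter> cball 0 1 \<Longrightarrow> w \<in> V \<inter> cball 0 1 \<Longrightarrow> \<alpha> \<in> {0..1} \<Longrightarrow>
                   f (\<alpha> *\<^sub>R u + (1 - \<alpha>) *\<^sub>R w) = \<alpha> * f u + (1 - \<alpha>) * f w"
    and zero: "f 0 = 0"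
begin

lemma homogeneous_nonneg: "f (t *\<^sub>R v) = t * f v" if "v \<in> V \<inter> cball 0 1" "t \<in> {0..1}"
  using affine[OF that(1) _ that(2), of 0] subspace zero by (simp add: subspace_0)

lemma odd: "f (- v) = - f v" if "v \<in> V \<inter> cball 0 1"
proof -
  have "- v \<in> V \<inter> cball 0 1" using that subspace by (simp add: subspace_neg)
  from affine[OF that this, of "1/2"] zero show ?thesis by simp
qed

lemma homogeneous: "f (t *\<^sub>R v) = t * f v"
  if v: "v \<in> V \<inter> cball 0 1" and tv: "t *\<^sub>R v \<in> V \<inter> cball 0 1"
proof -
  have small: "f (s *\<^sub>R u) = s * f u" if u: "u \<in> V \<inter> cball 0 1" and "\<bar>s\<bar> \<le> 1" for u s
  proof (cases "s \<ge> 0")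
    case True then show ?thesis using homogeneous_nonneg u \<open>\<bar>s\<bar> \<le> 1\<close> by simp
  next
    case False
    have "- u \<in> V \<inter> cball 0 1" using u subspace by (simp add: subspace_neg)
    with homogeneous_nonneg[of "- u" "- s"] False \<open>\<bar>s\<bar> \<le> 1\<close> odd[OF u] show ?thesis by simp
  qed
  show ?thesis
  proof (cases "\<bar>t\<bar> \<le> 1")
    case True then show ?thesis using small[OF v] by simp
  next
    case False
    then have "t \<noteq> 0" by auto
    then have "f v = (1 / t) * f (t *\<^sub>R v)" using small[OF tv, of "1 / t"] False by simp
    then show ?thesis using \<open>t \<noteq> 0\<close> by simp
  qed
qed

definition radial_extension :: "'a \<Rightarrow> real" where
  "radial_extension v = norm v * f (sgn v)"

lemma sgn_in_ball: "sgn v \<in> V \<inter> cball 0 1" if "v \<in> V"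
  using that subspace by (simp add: norm_sgn) (simp add: sgn_div_norm subspace_scale subspace_0)

lemma radial_extension_eq: "radial_extension v = r * f (v /\<^sub>R r)"
  if "v \<in> V" "0 < r" "norm v \<le> r"
proof (cases "v = 0")
  case True then show ?thesis by (simp add: radial_extension_def zero)
next
  case False
  have "v /\<^sub>R r = (norm v / r) *\<^sub>R sgn v"
    using False by (simp add: sgn_div_norm divide_inverse_commute)
  moreover have "v /\<^sub>R r \<in> V \<inter> cball 0 1"
    using that subspace by (simp add: subspace_scale field_simps)
  ultimately have "f (v /\<^sub>R r) = (norm v / r) * f (sgn v)"
    using homogeneous[OF sgn_in_ball[OF \<open>v \<in> V\<close>]] by simp
  then show ?thesis using \<open>0 < r\<close> by (simp add: radial_extension_def)
qed

lemma radial_extension_on_ball: "radial_extension v = f v" if "v \<in> V \<inter> cball 0 1"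
  using radial_extension_eq[of v 1] that by simp

lemma radial_extension_add: "radial_extension (u + w) = radial_extension u + radial_extension w"
  if "u \<in> V" "w \<in> V"
proof -
  define s where "s = norm u + norm w + 1"
  have s: "0 < s" "norm u \<le> s" "norm w \<le> s" "norm (u + w) \<le> 2 * s"
    using norm_triangle_ineq[of u w] norm_ge_zero[of u] norm_ge_zero[of w] unfolding s_def
    by argo+
  have "(u + w) /\<^sub>R (2 * s) = (1/2) *\<^sub>R (u /\<^sub>R s) + (1 - 1/2) *\<^sub>R (w /\<^sub>R s)"
    by (simp add: scaleR_add_right)
  moreover have "u /\<^sub>R s \<in> V \<inter> cball 0 1" "w /\<^sub>R s \<in> V \<inter> cball 0 1"
    using that s subspace by (simp_all add: subspace_scale field_simps)
  ultimately have "f ((u + w) /\<^sub>R (2 * s)) = (f (u /\<^sub>R s) + f (w /\<^sub>R s)) / 2"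
    using affine[of "u /\<^sub>R s" "w /\<^sub>R s" "1/2"] by simp
  then show ?thesis
    using radial_extension_eq[of "u + w" "2 * s"] radial_extension_eq[of u s]
      radial_extension_eq[of w s] that s subspace by (simp add: subspace_add field_simps)
qed

lemma radial_extension_scale: "radial_extension (c *\<^sub>R u) = c * radial_extension u" if "u \<in> V"
proof -
  define r where "r = norm u + norm (c *\<^sub>R u) + 1"
  have r: "0 < r" "norm u \<le> r" "norm (c *\<^sub>R u) \<le> r"
    using norm_ge_zero[of u] norm_ge_zero[of "c *\<^sub>R u"] unfolding r_def by linarith+
  have cu: "c *\<^sub>R u \<in> V" using that subspace by (simp add: subspace_scale)
  have "u /\<^sub>R r \<in> V \<inter> cball 0 1" "c *\<^sub>R (u /\<^sub>R r) \<in> V \<inter> cball 0 1"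
    using that cu r subspace by (simp_all add: subspace_scale field_simps)
  then have "f (c *\<^sub>R (u /\<^sub>R r)) = c * f (u /\<^sub>R r)"
    by (rule homogeneous)
  then show ?thesis using radial_extension_eq[OF that r(1,2)] radial_extension_eq[OF cu r(1,3)]
    by (simp add: scaleR_scaleR mult.commute)
qed

lemma linear_on_radial_extension: "linear_on V radial_extension"
  unfolding linear_on_def using subspace
  by (simp add: radial_extension_add radial_extension_scale subspace_scale)

lemma radial_extension_bounded:
  assumes "\<And>v. v \<in> V \<inter> cball 0 1 \<Longrightarrow> \<bar>f v\<bar> \<le> 1" and "v \<in> V"
  shows "\<bar>radial_extension v\<bar> \<le> norm v"
  using assms(1)[OF sgn_in_ball[OF assms(2)]]
  by (simp add: radial_extension_def abs_mult mult_left_le)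

lemma radial_extension_in_dual_sphere:
  assumes "\<And>v. v \<in> V \<inter> cball 0 1 \<Longrightarrow> \<bar>f v\<bar> \<le> 1"
    and "x \<in> V" "norm x = 1" "f x = 1"
  shows "radial_extension \<in> dual_sphere V"
  using assms radial_extension_on_ball[of x]
  by (intro dual_sphereI[OF linear_on_radial_extension radial_extension_bounded]) auto

end

lemma strictly_convex_sp_norm_add_less:
  assumes "subspace V" "strictly_convex_sp V"
    and "a \<in> V" "norm a \<le> 1" "x \<in> V" "norm x = 1" "a \<noteq> x"
  shows "norm (a + x) < 2"
proof -
  have "norm (a + x) \<le> 2" using norm_triangle_ineq[of a x] assms(4,6) by simp
  moreover have "norm (a + x) \<noteq> 2"
  proof
    assume "norm (a + x) = 2"
    then have "norm (midpoint a x) = 1" by (simp add: midpoint_def)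
    moreover have "midpoint a x \<in> V"
      using assms by (simp add: midpoint_def subspace_add subspace_scale)
    ultimately have "midpoint a x extreme_point_of (V \<inter> cball 0 1)"
      using assms(2) unfolding strictly_convex_sp_def by auto
    moreover have "midpoint a x \<in> open_segment a x" using assms(7) by simp
    moreover have "a \<in> V \<inter> cball 0 1" "x \<in> V \<inter> cball 0 1" using assms by auto
    ultimately show False unfolding extreme_point_of_def by blast
  qed
  ultimately show ?thesis by simp
qed

lemma norm_le_supn: "bdd_above (range (\<lambda>g. norm (z g))) \<Longrightarrow> norm (z g) \<le> supn z"
  unfolding supn_def by (rule cSUP_upper) auto

lemma supn_eq_norm: "(\<And>t. norm (z t) \<le> norm (z g)) \<Longrightarrow> supn z = norm (z g)"
  unfolding supn_def by (rule cSup_eq_maximum) auto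

lemma SZI: "w \<in> Z \<Longrightarrow> (\<And>t. norm (w t) \<le> 1) \<Longrightarrow> norm (w g) = 1 \<Longrightarrow> w \<in> SZ Z"
  unfolding SZ_def using supn_eq_norm[of w g] by auto

lemma Z0_subset_Zinf: "Z0 V \<subseteq> Zinf V"
proof
  fix z assume z: "z \<in> Z0 V"
  then have "finite {g. 1 < norm (z g)}" unfolding Z0_def by auto
  then have "bdd_above ((\<lambda>g. norm (z g)) ` {g. 1 < norm (z g)} \<union> {..1})"
    by simp
  moreover have "range (\<lambda>g. norm (z g)) \<subseteq> (\<lambda>g. norm (z g)) ` {g. 1 < norm (z g)} \<union> {..1}"
    by force
  ultimately have "bdd_above (range (\<lambda>g. norm (z g)))" by (rule bdd_above_mono)
  then show "z \<in> Zinf V" using z unfolding Z0_def Zinf_def by simp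
qed

lemma fun_upd_in_Z0:
  assumes z: "z \<in> Z0 V" and v: "v \<in> V g"
  shows "z(g := v) \<in> Z0 V"
proof -
  have "finite {t. e < norm ((z(g := v)) t)}" if "0 < e" for e
  proof (rule finite_subset)
    show "{t. e < norm ((z(g := v)) t)} \<subseteq> insert g {t. e < norm (z t)}" by auto
    show "finite (insert g {t. e < norm (z t)})" using z that unfolding Z0_def by simp
  qed
  moreover have "(z(g := v)) t \<in> V t" for t using z v unfolding Z0_def by simp
  ultimately show ?thesis unfolding Z0_def by simp
qed

lemma fun_upd_in_Zinf:
  assumes z: "z \<in> Zinf V" and v: "v \<in> V g"
  shows "z(g := v) \<in> Zinf V"
proof -
  have "bdd_above (range (\<lambda>t. norm ((z(g := v)) t)))"
  proof (rule bdd_above_mono)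
    show "range (\<lambda>t. norm ((z(g := v)) t)) \<subseteq> insert (norm v) (range (\<lambda>t. norm (z t)))"
      by auto
    show "bdd_above (insert (norm v) (range (\<lambda>t. norm (z t))))" using z unfolding Zinf_def by simp
  qed
  moreover have "(z(g := v)) t \<in> V t" for t using z v unfolding Zinf_def by simp
  ultimately show ?thesis unfolding Zinf_def by simp
qed

lemma norm_lincomb_le: "norm (a *\<^sub>R u + b *\<^sub>R w) \<le> (\<bar>a\<bar> + \<bar>b\<bar>) * max (norm u) (norm w)"
proof -
  have "norm (a *\<^sub>R u + b *\<^sub>R w) \<le> \<bar>a\<bar> * norm u + \<bar>b\<bar> * norm w"
    using norm_triangle_ineq[of "a *\<^sub>R u" "b *\<^sub>R w"] by simp
  also have "\<dots> \<le> (\<bar>a\<bar> + \<bar>b\<bar>) * max (norm u) (norm w)"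
    by (simp add: distrib_right add_mono mult_left_mono)
  finally show ?thesis .
qed

lemma lincomb_in_Z0:
  assumes "\<And>g. subspace (V g)" "u \<in> Z0 V" "w \<in> Z0 V"
  shows "(\<lambda>t. a *\<^sub>R u t + b *\<^sub>R w t) \<in> Z0 V"
proof -
  define C where "C = \<bar>a\<bar> + \<bar>b\<bar> + 1"
  have C: "0 < C" unfolding C_def by (simp add: add_nonneg_pos)
  have large: "{t. e < norm (a *\<^sub>R u t + b *\<^sub>R w t)}
      \<subseteq> {t. e / C < norm (u t)} \<union> {t. e / C < norm (w t)}" for e
  proof
    fix t assume "t \<in> {t. e < norm (a *\<^sub>R u t + b *\<^sub>R w t)}"
    moreover have "(\<bar>a\<bar> + \<bar>b\<bar>) * max (norm (u t)) (norm (w t))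
        \<le> C * max (norm (u t)) (norm (w t))"
      unfolding C_def by (intro mult_right_mono) (auto simp: le_max_iff_disj)
    ultimately have "e < C * max (norm (u t)) (norm (w t))"
      using norm_lincomb_le[of a "u t" b "w t"] by simp
    then have "e / C < max (norm (u t)) (norm (w t))"
      using C by (simp add: pos_divide_less_eq mult.commute)
    then show "t \<in> {t. e / C < norm (u t)} \<union> {t. e / C < norm (w t)}"
      by (simp add: less_max_iff_disj)
  qed
  have "finite {t. e < norm (a *\<^sub>R u t + b *\<^sub>R w t)}" if "0 < e" for e
  proof -
    have "finite {t. e / C < norm (u t)}" "finite {t. e / C < norm (w t)}"
      using assms(2,3) C that unfolding Z0_def by simp_all
    then show ?thesis using large finite_subset by blast
  qed
  moreover have "a *\<^sub>R u t + b *\<^sub>R w t \<in> V t" for t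
    using assms unfolding Z0_def by (simp add: subspace_add subspace_scale)
  ultimately show ?thesis unfolding Z0_def by simp
qed

lemma lincomb_in_Zinf:
  assumes "\<And>g. subspace (V g)" "u \<in> Zinf V" "w \<in> Zinf V"
  shows "(\<lambda>t. a *\<^sub>R u t + b *\<^sub>R w t) \<in> Zinf V"
proof -
  obtain M N where "\<And>t. norm (u t) \<le> M" "\<And>t. norm (w t) \<le> N"
    using assms(2,3) unfolding Zinf_def bdd_above_def by auto
  then have "norm (a *\<^sub>R u t + b *\<^sub>R w t) \<le> (\<bar>a\<bar> + \<bar>b\<bar>) * max M N" for t
    using norm_lincomb_le[of a "u t" b "w t"]
    by (smt (verit, best) abs_ge_zero max.mono mult_left_mono)
  then have "bdd_above (range (\<lambda>t. norm (a *\<^sub>R u t + b *\<^sub>R w t)))"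
    by (intro bdd_aboveI2)
  moreover have "a *\<^sub>R u t + b *\<^sub>R w t \<in> V t" for t
    using assms unfolding Zinf_def by (simp add: subspace_add subspace_scale)
  ultimately show ?thesis unfolding Zinf_def by simp
qed

locale sphere_isometry =
  fixes V :: "'g \<Rightarrow> 'a::real_normed_vector set"
    and Z :: "('g \<Rightarrow> 'a) set"
    and \<Delta> :: "('g \<Rightarrow> 'a) \<Rightarrow> 'b::real_normed_vector"
  assumes subspace_V: "\<And>g. subspace (V g)"
    and strictly_convex_V: "\<And>g. strictly_convex_sp (V g)"
    and Z_cases: "Z = Z0 V \<or> Z = Zinf V"
    and image_SZ: "\<Delta> ` SZ Z = sphere 0 1"
    and isometric: "\<And>z w. z \<in> SZ Z \<Longrightarrow> w \<in> SZ Z \<Longrightarrow>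
       dist (\<Delta> z) (\<Delta> w) = supn (\<lambda>g. z g - w g)"
    and affine_on_Aset: "\<And>g x a b \<alpha>. x \<in> V g \<inter> sphere 0 1 \<Longrightarrow>
       a \<in> Aset Z g x \<Longrightarrow> b \<in> Aset Z g x \<Longrightarrow> \<alpha> \<in> {0..1} \<Longrightarrow>
       \<Delta> (\<lambda>t. \<alpha> *\<^sub>R a t + (1 - \<alpha>) *\<^sub>R b t) = \<alpha> *\<^sub>R \<Delta> a + (1 - \<alpha>) *\<^sub>R \<Delta> b"
begin

lemma SZ_in_V: "z \<in> SZ Z \<Longrightarrow> z g \<in> V g"
  using Z_cases unfolding SZ_def Z0_def Zinf_def by auto

lemma SZ_norm_le_1:
  assumes "z \<in> SZ Z"
  shows "norm (z g) \<le> 1"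
proof -
  have "z \<in> Zinf V" using Z_cases Z0_subset_Zinf assms unfolding SZ_def by auto
  then have "norm (z g) \<le> supn z" unfolding Zinf_def by (simp add: norm_le_supn)
  then show ?thesis using assms unfolding SZ_def by simp
qed

lemma norm_\<Delta>: "z \<in> SZ Z \<Longrightarrow> norm (\<Delta> z) = 1"
  using image_SZ by auto

lemma fun_upd_in_SZ:
  assumes "z \<in> SZ Z" "v \<in> V g" "norm v \<le> 1" "norm ((z(g := v)) g') = 1"
  shows "z(g := v) \<in> SZ Z"
proof (rule SZI)
  show "z(g := v) \<in> Z"
    using Z_cases assms(1,2) fun_upd_in_Z0 fun_upd_in_Zinf unfolding SZ_def by auto
qed (use assms SZ_norm_le_1 in auto)

lemma lincomb_in_SZ:
  assumes "u \<in> SZ Z" "w \<in> SZ Z" "\<alpha> \<in> {0..1}" "norm (\<alpha> *\<^sub>R u g + (1 - \<alpha>) *\<^sub>R w g) = 1"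
  shows "(\<lambda>t. \<alpha> *\<^sub>R u t + (1 - \<alpha>) *\<^sub>R w t) \<in> SZ Z"
proof (rule SZI)
  show "(\<lambda>t. \<alpha> *\<^sub>R u t + (1 - \<alpha>) *\<^sub>R w t) \<in> Z"
    using Z_cases assms(1,2) lincomb_in_Z0[OF subspace_V] lincomb_in_Zinf[OF subspace_V]
    unfolding SZ_def by auto
  show "norm (\<alpha> *\<^sub>R u t + (1 - \<alpha>) *\<^sub>R w t) \<le> 1" for t
    using norm_lincomb_le[of \<alpha> "u t" "1 - \<alpha>" "w t"] assms(3) SZ_norm_le_1[OF assms(1), of t]
      SZ_norm_le_1[OF assms(2), of t] by auto
qed (use assms(4) in simp)

lemma norm_add_\<Delta>_Aset:
  assumes "x \<in> V g \<inter> sphere 0 1" "u \<in> Aset Z g x" "w \<in> Aset Z g x"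
  shows "norm (\<Delta> u + \<Delta> w) = 2"
proof -
  let ?m = "\<lambda>t. (1/2) *\<^sub>R u t + (1 - 1/2) *\<^sub>R w t"
  have "?m \<in> SZ Z"
    using assms
    by (intro lincomb_in_SZ[of _ _ _ g]) (auto simp: Aset_def scaleR_add_left[symmetric])
  moreover have "\<Delta> ?m = (1/2) *\<^sub>R (\<Delta> u + \<Delta> w)"
    using affine_on_Aset[OF assms, of "1/2"] by (simp add: scaleR_add_right)
  ultimately show ?thesis using norm_\<Delta> by fastforce
qed

lemma antipode_in_Aset:
  assumes x: "x \<in> V g \<inter> sphere 0 1" and u: "u \<in> Aset Z g (- x)"
    and p: "p \<in> SZ Z" "\<Delta> p = - \<Delta> u"
  shows "p \<in> Aset Z g x"
proof -
  have "p g = x"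
  proof (rule ccontr)
    assume "p g \<noteq> x"
    then have less: "norm (p g + x) < 2"
      using strictly_convex_sp_norm_add_less[OF subspace_V strictly_convex_V
          SZ_in_V[OF p(1)] SZ_norm_le_1[OF p(1)]] x by auto
    \<comment> \<open>w is at distance < 2 from p, yet w and u share the face A(g, -x), so \<Delta> w is at
      distance 2 from \<Delta> p = -\<Delta> u.\<close>
    define w where "w = p(g := - x)"
    have w: "w \<in> Aset Z g (- x)"
      using fun_upd_in_SZ[OF p(1), of "- x" g g] x subspace_V
      unfolding Aset_def w_def by (simp add: subspace_neg)
    have "dist (\<Delta> p) (\<Delta> w) = norm (\<Delta> u + \<Delta> w)"
      using p(2) by (simp add: dist_norm norm_minus_commute add.commute)
    also have "\<dots> = 2"
      using norm_add_\<Delta>_Aset[OF _ u w] x subspace_V by (simp add: subspace_neg)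
    finally have "supn (\<lambda>t. p t - w t) = 2" using isometric p(1) w unfolding Aset_def by auto
    moreover have "supn (\<lambda>t. p t - w t) = norm (p g + x)"
      by (subst supn_eq_norm[of _ g]) (auto simp: w_def)
    ultimately show False using less by simp
  qed
  then show ?thesis using p(1) unfolding Aset_def by simp
qed

lemma supp_on_antipodal_Aset:
  assumes x: "x \<in> V g \<inter> sphere 0 1" and \<psi>: "\<psi> \<in> supp Z \<Delta> g x"
    and u: "u \<in> Aset Z g (- x)"
  shows "\<psi> (\<Delta> u) = - 1"
proof -
  have "- \<Delta> u \<in> sphere 0 1" using u norm_\<Delta> unfolding Aset_def by simp
  then obtain p where p: "p \<in> SZ Z" "\<Delta> p = - \<Delta> u" using image_SZ by (metis imageE)
  then have "\<psi> (\<Delta> p) = 1"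
    using antipode_in_Aset[OF x u p] \<psi> unfolding supp_def
    by (metis (mono_tags, lifting) image_eqI mem_Collect_eq)
  moreover have "linear \<psi>" using \<psi> unfolding supp_def by (simp add: bounded_linear.linear)
  ultimately show ?thesis using p(2) by (simp add: linear_neg)
qed

lemma \<Delta>_affine_on_slice:
  assumes z: "z \<in> SZ Z" "g' \<noteq> g" "norm (z g') = 1"
    and uw: "u \<in> V g \<inter> cball 0 1" "w \<in> V g \<inter> cball 0 1" and \<alpha>: "\<alpha> \<in> {0..1}"
  shows "\<Delta> (z(g := \<alpha> *\<^sub>R u + (1 - \<alpha>) *\<^sub>R w))
           = \<alpha> *\<^sub>R \<Delta> (z(g := u)) + (1 - \<alpha>) *\<^sub>R \<Delta> (z(g := w))"
proof -
  have "z(g := v) \<in> Aset Z g' (z g')" if "v \<in> V g \<inter> cball 0 1" for v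
    using fun_upd_in_SZ[OF z(1), of v g g'] that z unfolding Aset_def by auto
  moreover have "z g' \<in> V g' \<inter> sphere 0 1" using SZ_in_V z by simp
  moreover have "(\<lambda>t. \<alpha> *\<^sub>R (z(g := u)) t + (1 - \<alpha>) *\<^sub>R (z(g := w)) t)
      = z(g := \<alpha> *\<^sub>R u + (1 - \<alpha>) *\<^sub>R w)"
    by (auto simp: scaleR_add_left[symmetric])
  ultimately show ?thesis using affine_on_Aset uw \<alpha> by metis
qed

lemma supp_norming_on_slice:
  assumes x: "x \<in> V g \<inter> sphere 0 1" and \<psi>: "\<psi> \<in> supp Z \<Delta> g x"
    and z: "z \<in> SZ Z" "g' \<noteq> g" "norm (z g') = 1"
  obtains L where "L \<in> dual_sphere (V g)" "L x = 1" "\<psi> (\<Delta> z) = L (z g)"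
proof -
  interpret \<psi>: bounded_linear \<psi> using \<psi> unfolding supp_def by simp
  define f where "f v = \<psi> (\<Delta> (z(g := v)))" for v
  have slice: "z(g := v) \<in> SZ Z" if "v \<in> V g \<inter> cball 0 1" for v
    using fun_upd_in_SZ[OF z(1), of v g g'] that z by auto
  have affine: "f (\<alpha> *\<^sub>R u + (1 - \<alpha>) *\<^sub>R w) = \<alpha> * f u + (1 - \<alpha>) * f w"
    if "u \<in> V g \<inter> cball 0 1" "w \<in> V g \<inter> cball 0 1" "\<alpha> \<in> {0..1}" for u w \<alpha>
    using \<Delta>_affine_on_slice[OF z that] by (simp add: f_def \<psi>.add \<psi>.scaleR)
  have bounded: "\<bar>f v\<bar> \<le> 1" if "v \<in> V g \<inter> cball 0 1" for v
    using onorm[OF \<psi>.bounded_linear_axioms, of "\<Delta> (z(g := v))"] \<psi> norm_\<Delta>[OF slice[OF that]]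
    unfolding f_def supp_def by simp
  have x_ball: "x \<in> V g \<inter> cball 0 1" "- x \<in> V g \<inter> cball 0 1"
    using x subspace_V by (auto simp: subspace_neg)
  have "z(g := x) \<in> Aset Z g x" using slice[OF x_ball(1)] unfolding Aset_def by simp
  then have fx: "f x = 1" using \<psi> unfolding f_def supp_def by blast
  have "z(g := - x) \<in> Aset Z g (- x)" using slice[OF x_ball(2)] unfolding Aset_def by simp
  then have "f (- x) = - 1" unfolding f_def by (rule supp_on_antipodal_Aset[OF x \<psi>])
  then have "f 0 = 0" using affine[OF x_ball, of "1/2"] fx by simp
  then interpret affine_on_unit_ball "V g" f
    using subspace_V affine by unfold_locales auto
  show thesis
  proof
    show "radial_extension \<in> dual_sphere (V g)"
      using radial_extension_in_dual_sphere bounded x fx by auto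
    show "radial_extension x = 1" using radial_extension_on_ball x_ball(1) fx by simp
    show "\<psi> (\<Delta> z) = radial_extension (z g)"
      using radial_extension_on_ball[of "z g"] SZ_in_V SZ_norm_le_1 z(1) by (simp add: f_def)
  qed
qed

end

theorem proposition3p1:
  fixes V :: "'g \<Rightarrow> 'a::banach set"
    and Z :: "('g \<Rightarrow> 'a) set"
    and \<Delta> :: "('g \<Rightarrow> 'a) \<Rightarrow> 'b::banach"
  assumes Gamma2: "\<exists>a b::'g. a \<noteq> b"
    and subsp: "\<And>g. subspace (V g)" and cl: "\<And>g. closed (V g)"
    and sc: "\<And>g. strictly_convex_sp (V g)"
    and dim2: "\<And>g. \<exists>B. B \<subseteq> V g \<and> independent B \<and> card B = 2"
    and dense: "\<And>g. V g \<inter> sphere 0 1 \<subseteq> closure (Sm (V g))"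
    and Zchoice: "Z = Z0 V \<or> Z = Zinf V"
    and surj: "\<Delta> ` SZ Z = sphere 0 1"
    and isom: "\<forall>z\<in>SZ Z. \<forall>w\<in>SZ Z. dist (\<Delta> z) (\<Delta> w) = supn (\<lambda>g. z g - w g)"
    and aff: "\<And>g x. x \<in> V g \<inter> sphere 0 1 \<Longrightarrow>
       \<forall>a\<in>Aset Z g x. \<forall>b\<in>Aset Z g x. \<forall>\<alpha>\<in>{0..1::real}.
         \<Delta> (\<lambda>t. \<alpha> *\<^sub>R a t + (1 - \<alpha>) *\<^sub>R b t) = \<alpha> *\<^sub>R \<Delta> a + (1 - \<alpha>) *\<^sub>R \<Delta> b"
  shows "\<forall>g x \<psi> z. x \<in> Sm (V g) \<longrightarrow> \<psi> \<in> supp Z \<Delta> g x \<longrightarrow> z \<in> SZ Z \<longrightarrow>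
           (\<exists>g'. g' \<noteq> g \<and> norm (z g') = 1) \<longrightarrow> \<psi> (\<Delta> z) = phi (V g) x (z g)"
proof (intro allI impI)
  fix g x \<psi> z
  assume x: "x \<in> Sm (V g)" and \<psi>: "\<psi> \<in> supp Z \<Delta> g x" and z: "z \<in> SZ Z"
    and "\<exists>g'. g' \<noteq> g \<and> norm (z g') = 1"
  then obtain g' where g': "g' \<noteq> g" "norm (z g') = 1" by blast
  interpret sphere_isometry V Z \<Delta>
    using subsp sc Zchoice surj isom aff by unfold_locales auto
  have smooth: "smooth_point (V g) x" using x unfolding Sm_def by simp
  then have "x \<in> V g \<inter> sphere 0 1" unfolding smooth_point_def by simp
  then obtain L where "L \<in> dual_sphere (V g)" "L x = 1" "\<psi> (\<Delta> z) = L (z g)"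
    using supp_norming_on_slice \<psi> z g' by blast
  then show "\<psi> (\<Delta> z) = phi (V g) x (z g)"
    using phi_eq_norming_functional[OF smooth] SZ_in_V[OF z] by simp
qed

end
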